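(* Let $T_C$ be a finite complete binary tree with vertices $v_1,\dots,v_M$, and let each vertex $v_i$ carry a parameter $l_i \in [0,1]$. Suppose $l_i = 1$ for every leaf $v_i$ of $T_C$. Then $\sum_{T \in \mathcal{T}(T_C)} p(T) = 1$, where $\mathcal{T}(T_C)$ is the set of all internal trees of $T_C$.
   Context: All trees are rooted, and children are designated left or right. A complete binary tree is a rooted tree in which every non-leaf vertex has exactly two children (a left and a right child). A full binary tree is a rooted tree in which every vertex has 0 or 2 children. An internal tree of $T_C$ is a full binary tree $T$ with $\mathrm{root}(T)=\mathrm{root}(T_C)$ whose vertices and edges are a subset of those of $T_C$ (left/right children as in $T_C$). For an internal tree $T$ with leaf set $L(T)$, its probability is $p(T) = \pi(\mathrm{root}(T))$, where $\pi$ is defined recursively on vertices of $T$ by $\pi(v_i) = l_i$ if $v_i \in L(T)$, and $\pi(v_i) = (1-l_i)\,\pi(\mathrm{left}(v_i))\,\pi(\mathrm{right}(v_i))$ otherwise, with $\mathrm{left}(v_i),\mathrm{right}(v_i)$ the left and right children of $v_i$ in $T$. *)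

theory Defs
  imports Complex_Main
begin

text \<open>Every tree of this type is thus complete (each non-leaf vertex has exactly two children).\<close>
datatype 'v btree = Lf 'v | Nd 'v "'v btree" "'v btree"

fun root :: "'v btree \<Rightarrow> 'v" where
  "root (Lf v) = v"
| "root (Nd v l r) = v"

fun vertices :: "'v btree \<Rightarrow> 'v list" where
  "vertices (Lf v) = [v]"
| "vertices (Nd v l r) = v # vertices l @ vertices r"

fun leaves :: "'v btree \<Rightarrow> 'v set" where
  "leaves (Lf v) = {v}"
| "leaves (Nd v l r) = leaves l \<union> leaves r"

text \<open>internal_tree T TC: T is a full binary tree with the same root as TC whose
  vertices and edges (with left/right orientation) are among those of TC.\<close>
fun internal_tree :: "'v btree \<Rightarrow> 'v btree \<Rightarrow> bool" where
  "internal_tree (Lf a) t = (a = root t)"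
| "internal_tree (Nd a l r) (Lf b) = False"
| "internal_tree (Nd a l r) (Nd b l' r') = (a = b \<and> internal_tree l l' \<and> internal_tree r r')"

fun tree_prob :: "('v \<Rightarrow> real) \<Rightarrow> 'v btree \<Rightarrow> real" where
  "tree_prob l (Lf v) = l v"
| "tree_prob l (Nd v t1 t2) = (1 - l v) * tree_prob l t1 * tree_prob l t2"

end

theory Submission
  imports Defs
begin

text \<open>An internal tree of a node is either the node itself, as a leaf, or the node on top of
  an internal tree of each subtree. Hence the total probability S satisfies
  S(Nd b x y) = l b + (1 - l b) S(x) S(y), and since S(Lf b) = l b = 1 at the leaves,
  induction gives S = 1 everywhere.\<close>

definition internal_trees :: "'v btree \<Rightarrow> 'v btree set" where
  "internal_trees TC = {T. internal_tree T TC}"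

lemma internal_trees_Lf: "internal_trees (Lf b) = {Lf b}"
proof -
  have "internal_tree T (Lf b) \<longleftrightarrow> T = Lf b" for T
    by (cases T) auto
  then show ?thesis
    by (auto simp: internal_trees_def)
qed

lemma internal_trees_Nd:
  "internal_trees (Nd b x y) =
     insert (Lf b) ((\<lambda>(p, q). Nd b p q) ` (internal_trees x \<times> internal_trees y))"
proof -
  have "internal_tree T (Nd b x y) \<longleftrightarrow>
          T = Lf b \<or> (\<exists>p q. T = Nd b p q \<and> internal_tree p x \<and> internal_tree q y)" for T
    by (cases T) auto
  then show ?thesis
    by (auto simp: internal_trees_def)
qed

lemma finite_internal_trees: "finite (internal_trees TC)"
  by (induction TC) (simp_all add: internal_trees_Lf internal_trees_Nd)

lemma sum_tree_prob_internal_trees_Nd: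
  fixes l :: "'v \<Rightarrow> real"
  shows "(\<Sum>T\<in>internal_trees (Nd b x y). tree_prob l T) =
           l b + (1 - l b) * (\<Sum>T\<in>internal_trees x. tree_prob l T)
                           * (\<Sum>T\<in>internal_trees y. tree_prob l T)"
proof -
  let ?A = "internal_trees x \<times> internal_trees y"
  let ?Nd = "\<lambda>(p, q). Nd b p q"
  have inj: "inj_on ?Nd ?A"
    by (auto simp: inj_on_def)
  have "finite (?Nd ` ?A)" "Lf b \<notin> ?Nd ` ?A"
    using finite_internal_trees by auto
  then have "(\<Sum>T\<in>internal_trees (Nd b x y). tree_prob l T) =
               l b + (\<Sum>T\<in>?Nd ` ?A. tree_prob l T)"
    by (simp add: internal_trees_Nd)
  also have "(\<Sum>T\<in>?Nd ` ?A. tree_prob l T) =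
               (\<Sum>(p, q)\<in>?A. (1 - l b) * tree_prob l p * tree_prob l q)"
    unfolding sum.reindex[OF inj] by (simp add: case_prod_unfold)
  also have "\<dots> = (1 - l b) * (\<Sum>(p, q)\<in>?A. tree_prob l p * tree_prob l q)"
    by (simp add: sum_distrib_left case_prod_unfold mult.assoc)
  also have "(\<Sum>(p, q)\<in>?A. tree_prob l p * tree_prob l q) =
               (\<Sum>T\<in>internal_trees x. tree_prob l T) * (\<Sum>T\<in>internal_trees y. tree_prob l T)"
    by (simp add: sum_product sum.cartesian_product)
  finally show ?thesis
    by (simp add: mult.assoc)
qed

lemma sum_tree_prob_internal_trees_eq_1:
  fixes l :: "'v \<Rightarrow> real"
  assumes "\<And>v. v \<in> leaves TC \<Longrightarrow> l v = 1"
  shows "(\<Sum>T\<in>internal_trees TC. tree_prob l T) = 1"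
  using assms
  by (induction TC) (simp_all add: internal_trees_Lf sum_tree_prob_internal_trees_Nd)

theorem mainTheorem2:
  fixes TC :: "'v btree" and l :: "'v \<Rightarrow> real"
  assumes "distinct (vertices TC)"
    and "\<And>v. v \<in> set (vertices TC) \<Longrightarrow> 0 \<le> l v \<and> l v \<le> 1"
    and "\<And>v. v \<in> leaves TC \<Longrightarrow> l v = 1"
  shows "(\<Sum>T\<in>{T. internal_tree T TC}. tree_prob l T) = 1"
  using sum_tree_prob_internal_trees_eq_1[OF assms(3)]
  by (simp add: internal_trees_def)

end
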